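(* Let $\nu$ be a compactly supported measure on $\mathbb R$ that is finite on compact subsets of $\mathbb R\setminus\{0\}$. Then $\int|x|\nu(dx)<\infty$ if and only if $\int_1^\infty\frac{ds}{s^2}\int\nu(dx)(1-\cos(sx))<\infty$. *)

theory Defs
  imports "HOL-Analysis.Analysis"
begin

end

theory Submission
  imports Defs
begin

text \<open>
  By Tonelli, the double integral equals \<open>\<integral> |x| G(|x|) \<nu>(dx)\<close> with
  \<open>G(a) = \<integral>\<^sub>a\<^sup>\<infinity> (1 - cos t) / t\<^sup>2 dt\<close>, via the substitution \<open>t = s|x|\<close>.
  \<open>G\<close> is decreasing, finite at \<open>0\<close> (as \<open>1 - cos t \<le> t\<^sup>2/2\<close>) and positive everywhere,
  so on the bounded support \<open>|x| \<le> R\<close> of \<open>\<nu>\<close> the weight \<open>G(|x|)\<close> lies between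
  \<open>G(R) > 0\<close> and \<open>G(0) < \<infinity>\<close>. Both integrals are therefore finite simultaneously.
\<close>

definition cos_tail :: "real \<Rightarrow> ennreal" where
  "cos_tail a = (\<integral>\<^sup>+ t \<in> {a..}. ennreal ((1 - cos t) / t\<^sup>2) \<partial>lborel)"

lemma borel_measurable_cos_tail [measurable]: "cos_tail \<in> borel_measurable borel"
  unfolding cos_tail_def[abs_def] by (measurable, unfold atLeast_iff, measurable)

lemma one_minus_cos_le: "1 - cos (t::real) \<le> t\<^sup>2 / 2"
proof -
  have "1 - cos t = 2 * (sin (t/2))\<^sup>2"
    using cos_double_sin[of "t/2"] by simp
  moreover have "(sin (t/2))\<^sup>2 \<le> (t/2)\<^sup>2"
    using abs_sin_x_le_abs_x[of "t/2"] by (metis abs_le_square_iff)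
  ultimately show ?thesis by (simp add: power_divide)
qed

lemma cos_tail_antimono: "a \<le> b \<Longrightarrow> cos_tail b \<le> cos_tail a"
  unfolding cos_tail_def by (intro nn_integral_mono) (auto simp: indicator_def)

lemma cos_tail_zero_finite: "cos_tail 0 < \<infinity>"
proof -
  have integrand_le: "ennreal ((1 - cos t) / t\<^sup>2) * indicator {0..} t
      \<le> ennreal (1/2) * indicator {0..1} t + ennreal 2 * (ennreal (t powr -2) * indicator {1..} t)"
    for t :: real
  proof (cases "0 \<le> t \<and> t \<le> 1")
    case True
    have "(1 - cos t) / t\<^sup>2 \<le> 1/2"
      using one_minus_cos_le[of t] by (cases "t = 0") (simp_all add: divide_le_eq)
    then have "ennreal ((1 - cos t) / t\<^sup>2) \<le> ennreal (1/2)"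
      by (rule ennreal_leI)
    with True show ?thesis by (simp add: add_increasing2)
  next
    case False
    show ?thesis
    proof (cases "t > 1")
      case True
      have "(1 - cos t) / t\<^sup>2 \<le> 2 / t\<^sup>2"
        using cos_ge_minus_one[of t] True by (intro divide_right_mono) auto
      also have "\<dots> = 2 * t powr -2"
        using True by (simp add: powr_minus powr_numeral divide_inverse)
      finally have "ennreal ((1 - cos t) / t\<^sup>2) \<le> ennreal (2 * t powr -2)"
        by (rule ennreal_leI)
      then have "ennreal ((1 - cos t) / t\<^sup>2) \<le> ennreal 2 * ennreal (t powr -2)"
        by (simp add: ennreal_mult)
      with True show ?thesis by (simp add: add_increasing)
    qed (use False in auto)
  qed
  have "((\<lambda>t::real. t powr -2) has_integral 1) {1..}"
    using has_integral_powr_to_inf[of "-2" 1] by simp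
  then have powr_integral: "(\<integral>\<^sup>+ t. ennreal (t powr -2) * indicator {1..} t \<partial>lborel) = 1"
    by (subst nn_integral_has_integral_lebesgue') auto
  have "cos_tail 0 \<le> (\<integral>\<^sup>+ t. ennreal (1/2) * indicator {0..1} t
      + ennreal 2 * (ennreal (t powr -2) * indicator {1..} t) \<partial>lborel)"
    unfolding cos_tail_def by (intro nn_integral_mono integrand_le)
  also have "\<dots> = ennreal (1/2) + ennreal 2"
    by (subst nn_integral_add) (auto simp: nn_integral_cmult powr_integral)
  also have "\<dots> < \<infinity>"
    by (simp add: less_top[symmetric] ennreal_add_eq_top)
  finally show ?thesis .
qed

lemma cos_tail_pos: "cos_tail a > 0"
proof -
  obtain n :: nat where "a \<le> real n"
    using real_arch_simple by blast
  moreover have "real n * 1 \<le> real n * (2 * pi)"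
    using pi_gt3 by (intro mult_left_mono) auto
  ultimately have "a \<le> 2 * real n * pi"
    by linarith
  define b where "b = 2 * real n * pi + pi/2"
  have "0 \<le> 2 * real n * pi"
    by simp
  then have "a \<le> b" "0 < b"
    using \<open>a \<le> 2 * real n * pi\<close> pi_gt_zero unfolding b_def by linarith+
  have lower: "ennreal (1 / (b + pi)\<^sup>2) * indicator {b..b + pi} t
      \<le> ennreal ((1 - cos t) / t\<^sup>2) * indicator {a..} t" for t
  proof (cases "t \<in> {b..b + pi}")
    case True
    have "cos t = cos (2 * real n * pi + (pi/2 + (t - b)))"
      by (simp add: b_def)
    also have "\<dots> = - sin (t - b)"
      by (simp add: cos_add)
    also have "\<dots> \<le> 0"
      using True by (intro neg_le_0_iff_le[THEN iffD2] sin_ge_zero) auto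
    finally have "1 / (b + pi)\<^sup>2 \<le> (1 - cos t) / t\<^sup>2"
      using True \<open>0 < b\<close> by (intro frac_le power_mono) auto
    with True \<open>a \<le> b\<close> show ?thesis
      by (auto intro: ennreal_leI)
  qed simp
  have "0 < b + pi"
    using \<open>0 < b\<close> pi_gt_zero by linarith
  then have "0 < ennreal (1 / (b + pi)\<^sup>2) * ennreal pi"
    by (simp add: ennreal_zero_less_mult_iff)
  also have "\<dots> = (\<integral>\<^sup>+ t. ennreal (1 / (b + pi)\<^sup>2) * indicator {b..b + pi} t \<partial>lborel)"
    using pi_gt_zero by (simp add: nn_integral_cmult)
  also have "\<dots> \<le> cos_tail a"
    unfolding cos_tail_def by (intro nn_integral_mono lower)
  finally show ?thesis .
qed

lemma nn_integral_one_minus_cos_scaled: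
  fixes x :: real
  assumes "x \<noteq> 0"
  shows "(\<integral>\<^sup>+ s \<in> {1..}. ennreal (1 / s\<^sup>2) * ennreal (1 - cos (s * x)) \<partial>lborel)
    = ennreal \<bar>x\<bar> * cos_tail \<bar>x\<bar>"
proof -
  define a where "a = \<bar>x\<bar>"
  have "a > 0"
    using assms by (simp add: a_def)
  let ?f = "\<lambda>s::real. ennreal (1 / s\<^sup>2) * ennreal (1 - cos (s * x)) * indicator {1..} s"
  have substituted: "?f (u / a) = ennreal (a\<^sup>2) * (ennreal ((1 - cos u) / u\<^sup>2) * indicator {a..} u)"
    for u
  proof -
    have "cos (u / a * x) = cos u"
      by (metis a_def cos_abs_real abs_mult abs_divide abs_abs
          \<open>a > 0\<close> nonzero_eq_divide_eq order_less_irrefl)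
    moreover have "1 / (u / a)\<^sup>2 * (1 - cos u) = a\<^sup>2 * ((1 - cos u) / u\<^sup>2)"
      by (simp add: power_divide)
    moreover have "(indicator {1..} (u / a) :: ennreal) = indicator {a..} u"
      using \<open>a > 0\<close> by (simp add: indicator_def le_divide_eq)
    ultimately show ?thesis
      using \<open>a > 0\<close> by (simp add: ennreal_mult' mult_ac flip: ennreal_mult)
  qed
  have "(\<integral>\<^sup>+ s. ?f s \<partial>lborel) = ennreal (1 / a) * (\<integral>\<^sup>+ u. ?f (u / a) \<partial>lborel)"
    using nn_integral_real_affine[of ?f "1 / a" 0] \<open>a > 0\<close> by simp
  also have "\<dots> = ennreal (1 / a) * (ennreal (a\<^sup>2) * cos_tail a)"
    unfolding substituted cos_tail_def by (subst nn_integral_cmult) auto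
  also have "\<dots> = ennreal a * cos_tail a"
    using \<open>a > 0\<close> by (simp add: mult.assoc[symmetric] power2_eq_square flip: ennreal_mult)
  finally show ?thesis
    by (simp add: a_def)
qed

lemma nn_integral_density_indicator_eq:
  assumes "A \<in> sets M" "f \<in> borel_measurable M" "\<And>x. x \<in> space M - A \<Longrightarrow> f x = 0"
  shows "(\<integral>\<^sup>+ x. f x \<partial>density M (indicator A)) = (\<integral>\<^sup>+ x. f x \<partial>M)"
  using assms by (subst nn_integral_density) (auto intro!: nn_integral_cong simp: indicator_def)

lemma sigma_finite_density_punctured:
  fixes M :: "real measure"
  assumes sets_M: "sets M = sets borel"
    and loc_finite: "\<And>K. compact K \<Longrightarrow> K \<subseteq> - {0} \<Longrightarrow> emeasure M K < \<infinity>"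
  shows "sigma_finite_measure (density M (indicator (- {0})))"
proof
  let ?N = "density M (indicator (- {0}))"
  define annulus where "annulus n = cball 0 (real n) \<inter> {x::real. 1 / real (Suc n) \<le> \<bar>x\<bar>}" for n
  have compact_annulus: "compact (annulus n)" for n
    unfolding annulus_def by (intro compact_Int_closed compact_cball closed_Collect_le continuous_intros)
  then have annulus_sets: "annulus n \<in> sets borel" for n
    by (simp add: borel_closed compact_imp_closed)
  have space_M: "space M = UNIV"
    using sets_eq_imp_space_eq[OF sets_M] by simp
  have emeasure_N: "emeasure ?N B = emeasure M (B - {0})" if "B \<in> sets borel" for B
    using that sets_M
    by (subst emeasure_density) (auto intro!: nn_integral_indicator[of _ M, simplified]
        simp flip: indicator_inter_arith simp: Diff_eq Int_commute)
  define A where "A = insert {0} (range annulus)"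
  have cover: "x \<in> \<Union> A" for x :: real
  proof (cases "x = 0")
    case False
    obtain n :: nat where n: "max \<bar>x\<bar> (1 / \<bar>x\<bar>) \<le> real n"
      using real_arch_simple by blast
    then have "1 / real (Suc n) \<le> \<bar>x\<bar>"
      using False by (auto simp: divide_le_eq field_simps intro: add_increasing)
    with n have "x \<in> annulus n"
      by (simp add: annulus_def)
    then show ?thesis
      by (auto simp: A_def)
  qed (simp add: A_def)
  have finite_emeasure: "emeasure ?N a \<noteq> \<infinity>" if "a \<in> A" for a
  proof -
    have punctured: "annulus n \<subseteq> - {0}" for n
      by (auto simp: annulus_def)
    then have "annulus n - {0} = annulus n" for n
      by blast
    moreover have "emeasure M (annulus n) \<noteq> \<infinity>" for n
      using loc_finite[OF compact_annulus punctured, of n] by simp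
    ultimately show ?thesis
      using that annulus_sets by (auto simp: A_def emeasure_N)
  qed
  show "\<exists>A. countable A \<and> A \<subseteq> sets ?N \<and> \<Union> A = space ?N \<and> (\<forall>a\<in>A. emeasure ?N a \<noteq> \<infinity>)"
  proof (intro exI[of _ A] conjI ballI)
    show "countable A" "A \<subseteq> sets ?N"
      using annulus_sets sets_M by (auto simp: A_def)
    show "\<Union> A = space ?N"
      using cover space_M by auto
  qed (rule finite_emeasure)
qed

lemma nn_integral_one_minus_cos_transform:
  fixes \<nu> :: "real measure"
  assumes sets_nu: "sets \<nu> = sets borel"
    and loc_finite: "\<And>K. compact K \<Longrightarrow> K \<subseteq> - {0} \<Longrightarrow> emeasure \<nu> K < \<infinity>"
  shows "(\<integral>\<^sup>+ s \<in> {1..}. ennreal (1 / s\<^sup>2) * (\<integral>\<^sup>+ x. ennreal (1 - cos (s * x)) \<partial>\<nu>) \<partial>lborel)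
    = (\<integral>\<^sup>+ x. ennreal \<bar>x\<bar> * cos_tail \<bar>x\<bar> \<partial>\<nu>)"
proof -
  note [measurable_cong] = sets_nu
  \<comment> \<open>\<open>\<nu>\<close> need not be \<open>\<sigma>\<close>-finite at \<open>0\<close>, where all integrands vanish, so Tonelli is
    applied to \<open>\<nu>\<close> restricted to \<open>-{0}\<close>.\<close>
  define N where "N = density \<nu> (indicator (- {0}))"
  have sets_N [measurable_cong]: "sets N = sets borel"
    by (simp add: N_def sets_nu)
  have integral_N: "(\<integral>\<^sup>+ x. f x \<partial>N) = (\<integral>\<^sup>+ x. f x \<partial>\<nu>)"
    if "f \<in> borel_measurable borel" "f 0 = 0" for f :: "real \<Rightarrow> ennreal"
    unfolding N_def using that sets_nu
    by (intro nn_integral_density_indicator_eq) (auto simp: sets_eq_imp_space_eq[OF sets_nu])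
  interpret N: sigma_finite_measure N
    unfolding N_def by (rule sigma_finite_density_punctured[OF sets_nu loc_finite])
  interpret pair_sigma_finite N lborel
    by (simp add: pair_sigma_finite_def N.sigma_finite_measure_axioms lborel.sigma_finite_measure_axioms)
  define F where "F s x = ennreal (1 / s\<^sup>2) * ennreal (1 - cos (s * x)) * indicator {1..} s"
    for s x :: real
  have [measurable]: "(\<lambda>(x, s). F s x) \<in> borel_measurable (N \<Otimes>\<^sub>M lborel)"
    unfolding F_def by measurable
  have "(\<integral>\<^sup>+ s \<in> {1..}. ennreal (1 / s\<^sup>2) * (\<integral>\<^sup>+ x. ennreal (1 - cos (s * x)) \<partial>\<nu>) \<partial>lborel)
      = (\<integral>\<^sup>+ s. (\<integral>\<^sup>+ x. F s x \<partial>\<nu>) \<partial>lborel)"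
  proof (intro nn_integral_cong)
    fix s :: real
    have "(\<lambda>x. ennreal (1 - cos (s * x))) \<in> borel_measurable \<nu>"
      by measurable
    then show "ennreal (1 / s\<^sup>2) * (\<integral>\<^sup>+ x. ennreal (1 - cos (s * x)) \<partial>\<nu>) * indicator {1..} s
        = (\<integral>\<^sup>+ x. F s x \<partial>\<nu>)"
      unfolding F_def by (simp add: mult.commute[of _ "indicator _ _"] mult.assoc flip: nn_integral_cmult)
  qed
  also have "\<dots> = (\<integral>\<^sup>+ s. (\<integral>\<^sup>+ x. F s x \<partial>N) \<partial>lborel)"
    by (intro nn_integral_cong integral_N[symmetric]) (simp_all add: F_def)
  also have "\<dots> = (\<integral>\<^sup>+ x. (\<integral>\<^sup>+ s. F s x \<partial>lborel) \<partial>N)"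
    by (rule Fubini'[of "\<lambda>x s. F s x"]) simp
  also have "\<dots> = (\<integral>\<^sup>+ x. ennreal \<bar>x\<bar> * cos_tail \<bar>x\<bar> \<partial>N)"
  proof (intro nn_integral_cong)
    fix x :: real
    show "(\<integral>\<^sup>+ s. F s x \<partial>lborel) = ennreal \<bar>x\<bar> * cos_tail \<bar>x\<bar>"
      using nn_integral_one_minus_cos_scaled[of x] by (cases "x = 0") (simp_all add: F_def)
  qed
  also have "\<dots> = (\<integral>\<^sup>+ x. ennreal \<bar>x\<bar> * cos_tail \<bar>x\<bar> \<partial>\<nu>)"
    by (rule integral_N) simp_all
  finally show ?thesis .
qed

lemma nn_integral_abs_cos_tail_finite_iff:
  fixes M :: "real measure"
  assumes sets_M: "sets M = sets borel" and bounded: "AE x in M. \<bar>x\<bar> \<le> R"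
  shows "(\<integral>\<^sup>+ x. ennreal \<bar>x\<bar> * cos_tail \<bar>x\<bar> \<partial>M) < \<infinity>
    \<longleftrightarrow> (\<integral>\<^sup>+ x. ennreal \<bar>x\<bar> \<partial>M) < \<infinity>"
proof -
  note [measurable_cong] = sets_M
  have "(\<integral>\<^sup>+ x. ennreal \<bar>x\<bar> * cos_tail \<bar>x\<bar> \<partial>M) \<le> (\<integral>\<^sup>+ x. ennreal \<bar>x\<bar> * cos_tail 0 \<partial>M)"
    by (intro nn_integral_mono mult_left_mono cos_tail_antimono) simp_all
  also have "\<dots> = (\<integral>\<^sup>+ x. ennreal \<bar>x\<bar> \<partial>M) * cos_tail 0"
    by (rule nn_integral_multc) measurable
  finally have upper: "(\<integral>\<^sup>+ x. ennreal \<bar>x\<bar> * cos_tail \<bar>x\<bar> \<partial>M)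
      \<le> (\<integral>\<^sup>+ x. ennreal \<bar>x\<bar> \<partial>M) * cos_tail 0" .
  have "(\<integral>\<^sup>+ x. ennreal \<bar>x\<bar> \<partial>M) * cos_tail R = (\<integral>\<^sup>+ x. ennreal \<bar>x\<bar> * cos_tail R \<partial>M)"
    by (rule nn_integral_multc[symmetric]) measurable
  also have "\<dots> \<le> (\<integral>\<^sup>+ x. ennreal \<bar>x\<bar> * cos_tail \<bar>x\<bar> \<partial>M)"
    by (intro nn_integral_mono_AE eventually_mono[OF bounded] mult_left_mono cos_tail_antimono) simp_all
  finally have lower: "(\<integral>\<^sup>+ x. ennreal \<bar>x\<bar> \<partial>M) * cos_tail R
      \<le> (\<integral>\<^sup>+ x. ennreal \<bar>x\<bar> * cos_tail \<bar>x\<bar> \<partial>M)" .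
  show ?thesis
  proof
    assume "(\<integral>\<^sup>+ x. ennreal \<bar>x\<bar> * cos_tail \<bar>x\<bar> \<partial>M) < \<infinity>"
    with lower have "(\<integral>\<^sup>+ x. ennreal \<bar>x\<bar> \<partial>M) * cos_tail R < \<infinity>"
      by (rule le_less_trans)
    with cos_tail_pos[of R] show "(\<integral>\<^sup>+ x. ennreal \<bar>x\<bar> \<partial>M) < \<infinity>"
      by (auto simp: ennreal_mult_less_top)
  next
    assume "(\<integral>\<^sup>+ x. ennreal \<bar>x\<bar> \<partial>M) < \<infinity>"
    with cos_tail_zero_finite have "(\<integral>\<^sup>+ x. ennreal \<bar>x\<bar> \<partial>M) * cos_tail 0 < \<infinity>"
      by (simp add: ennreal_mult_less_top)
    with upper show "(\<integral>\<^sup>+ x. ennreal \<bar>x\<bar> * cos_tail \<bar>x\<bar> \<partial>M) < \<infinity>"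
      by (rule le_less_trans)
  qed
qed

theorem proposition5p7:
  fixes \<nu> :: "real measure"
  assumes sets_nu: "sets \<nu> = sets borel"
    and compact_supp: "\<exists>K. compact K \<and> emeasure \<nu> (- K) = 0"
    and loc_finite: "\<And>K. compact K \<Longrightarrow> K \<subseteq> - {0} \<Longrightarrow> emeasure \<nu> K < \<infinity>"
  shows "(\<integral>\<^sup>+ x. ennreal \<bar>x\<bar> \<partial>\<nu>) < \<infinity> \<longleftrightarrow>
         (\<integral>\<^sup>+ s \<in> {1..}. ennreal (1 / s\<^sup>2) * (\<integral>\<^sup>+ x. ennreal (1 - cos (s * x)) \<partial>\<nu>) \<partial>lborel) < \<infinity>"
proof -
  obtain K where "compact K" and null: "emeasure \<nu> (- K) = 0"
    using compact_supp by blast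
  obtain R where R: "\<And>x. x \<in> K \<Longrightarrow> \<bar>x\<bar> \<le> R"
    using compact_imp_bounded[OF \<open>compact K\<close>] unfolding bounded_real by blast
  have "- K \<in> null_sets \<nu>"
    using null \<open>compact K\<close> by (intro null_setsI) (auto simp: sets_nu compact_imp_closed)
  then have "AE x in \<nu>. \<bar>x\<bar> \<le> R"
    by (rule AE_I') (use R in auto)
  then have finite_iff:
      "(\<integral>\<^sup>+ x. ennreal \<bar>x\<bar> * cos_tail \<bar>x\<bar> \<partial>\<nu>) < \<infinity> \<longleftrightarrow> (\<integral>\<^sup>+ x. ennreal \<bar>x\<bar> \<partial>\<nu>) < \<infinity>"
    by (rule nn_integral_abs_cos_tail_finite_iff[OF sets_nu])
  have "(\<integral>\<^sup>+ s \<in> {1..}. ennreal (1 / s\<^sup>2) * (\<integral>\<^sup>+ x. ennreal (1 - cos (s * x)) \<partial>\<nu>) \<partial>lborel)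
      = (\<integral>\<^sup>+ x. ennreal \<bar>x\<bar> * cos_tail \<bar>x\<bar> \<partial>\<nu>)"
    using sets_nu loc_finite by (rule nn_integral_one_minus_cos_transform)
  with finite_iff show ?thesis
    by simp
qed

end
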